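(* Let $G$ be a connected graph and let $Q$ be a clique separator of $G$. If $G$ is strong $Q$-colorable, then $\Gamma_Q$ contains no full antipodal triple.
   Context: Graphs are finite and simple. A clique is an inclusion-maximal set of pairwise adjacent vertices. A clique $Q$ of $G$ is a clique separator if $G-Q$ has at least two connected components; if their vertex sets are $V_1,\dots,V_s$, put $\gamma_i=G[V_i\cup Q]$ and $\Gamma_Q=\{\gamma_1,\dots,\gamma_s\}$. A relevant clique of $\gamma\in\Gamma_Q$ is a clique $K$ of the graph $\gamma$ with $K\cap Q\neq\emptyset$ and $K\neq Q$. An element $\gamma\in\Gamma_Q$ is a neighboring subgraph of a vertex $v$ if $v$ belongs to some relevant clique of $\gamma$; a set $W\subseteq\Gamma_Q$ is neighboring if there is $v\in Q$ such that every member of $W$ is a neighboring subgraph of $v$; a neighboring triple is a neighboring set of three elements. Antipodality on $\Gamma_Q$: $\gamma\leftrightarrow\gamma'$ iff there are relevant cliques $K$ of $\gamma$ and $K'$ of $\gamma'$ with $K\cap K'\cap Q\neq\emptyset$ and $K\cap Q$, $K'\cap Q$ inclusion-wise incomparable. A full antipodal triple is a neighboring triple whose elements are pairwise antipodal. $G$ is strong $Q$-colorable if there is $f:\Gamma_Q\to\{1,\dots,s\}$ (a strong $Q$-coloring) such that (1) $\gamma\leftrightarrow\gamma'$ implies $f(\gamma)\neq f(\gamma')$, and (2) $|f(\Lambda)|\le 2$ for every neighboring triple $\Lambda\subseteq\Gamma_Q$. *)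

theory Defs
  imports Main
begin

definition graph :: "'a set \<Rightarrow> ('a \<Rightarrow> 'a \<Rightarrow> bool) \<Rightarrow> bool" where
  "graph V E \<longleftrightarrow> finite V \<and> (\<forall>x y. E x y \<longrightarrow> E y x) \<and> (\<forall>x. \<not> E x x)
     \<and> (\<forall>x y. E x y \<longrightarrow> x \<in> V \<and> y \<in> V)"

definition reach :: "'a set \<Rightarrow> ('a \<Rightarrow> 'a \<Rightarrow> bool) \<Rightarrow> 'a \<Rightarrow> 'a \<Rightarrow> bool" where
  "reach U E = (\<lambda>a b. E a b \<and> a \<in> U \<and> b \<in> U)\<^sup>*\<^sup>*"

definition connected_graph :: "'a set \<Rightarrow> ('a \<Rightarrow> 'a \<Rightarrow> bool) \<Rightarrow> bool" where
  "connected_graph V E \<longleftrightarrow> V \<noteq> {} \<and> (\<forall>x\<in>V. \<forall>y\<in>V. reach V E x y)"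

definition components :: "'a set \<Rightarrow> ('a \<Rightarrow> 'a \<Rightarrow> bool) \<Rightarrow> 'a set set" where
  "components U E = {{y \<in> U. reach U E x y} | x. x \<in> U}"

definition complete_set :: "'a set \<Rightarrow> ('a \<Rightarrow> 'a \<Rightarrow> bool) \<Rightarrow> 'a set \<Rightarrow> bool" where
  "complete_set U E K \<longleftrightarrow> K \<subseteq> U \<and> (\<forall>x\<in>K. \<forall>y\<in>K. x \<noteq> y \<longrightarrow> E x y)"

definition clique :: "'a set \<Rightarrow> ('a \<Rightarrow> 'a \<Rightarrow> bool) \<Rightarrow> 'a set \<Rightarrow> bool" where
  "clique U E K \<longleftrightarrow> complete_set U E K \<and> (\<forall>K'. complete_set U E K' \<and> K \<subseteq> K' \<longrightarrow> K' = K)"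

definition clique_separator :: "'a set \<Rightarrow> ('a \<Rightarrow> 'a \<Rightarrow> bool) \<Rightarrow> 'a set \<Rightarrow> bool" where
  "clique_separator V E Q \<longleftrightarrow> clique V E Q \<and> card (components (V - Q) E) \<ge> 2"

text \<open>\<Gamma>_Q: each subgraph \<gamma>_i = G[V_i \<union> Q] is represented by its vertex set V_i \<union> Q
 (it is the induced subgraph on that set).\<close>
definition Gamma :: "'a set \<Rightarrow> ('a \<Rightarrow> 'a \<Rightarrow> bool) \<Rightarrow> 'a set \<Rightarrow> 'a set set" where
  "Gamma V E Q = {C \<union> Q | C. C \<in> components (V - Q) E}"

definition relevant_clique :: "('a \<Rightarrow> 'a \<Rightarrow> bool) \<Rightarrow> 'a set \<Rightarrow> 'a set \<Rightarrow> 'a set \<Rightarrow> bool" where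
  "relevant_clique E Q \<gamma> K \<longleftrightarrow> clique \<gamma> E K \<and> K \<inter> Q \<noteq> {} \<and> K \<noteq> Q"

definition neighboring_subgraph :: "('a \<Rightarrow> 'a \<Rightarrow> bool) \<Rightarrow> 'a set \<Rightarrow> 'a \<Rightarrow> 'a set \<Rightarrow> bool" where
  "neighboring_subgraph E Q v \<gamma> \<longleftrightarrow> (\<exists>K. relevant_clique E Q \<gamma> K \<and> v \<in> K)"

definition neighboring :: "'a set \<Rightarrow> ('a \<Rightarrow> 'a \<Rightarrow> bool) \<Rightarrow> 'a set \<Rightarrow> 'a set set \<Rightarrow> bool" where
  "neighboring V E Q W \<longleftrightarrow> W \<subseteq> Gamma V E Q \<and>
     (\<exists>v\<in>Q. \<forall>\<gamma>\<in>W. neighboring_subgraph E Q v \<gamma>)"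

definition neighboring_triple :: "'a set \<Rightarrow> ('a \<Rightarrow> 'a \<Rightarrow> bool) \<Rightarrow> 'a set \<Rightarrow> 'a set set \<Rightarrow> bool" where
  "neighboring_triple V E Q W \<longleftrightarrow> neighboring V E Q W \<and> card W = 3"

definition antipodal :: "('a \<Rightarrow> 'a \<Rightarrow> bool) \<Rightarrow> 'a set \<Rightarrow> 'a set \<Rightarrow> 'a set \<Rightarrow> bool" where
  "antipodal E Q \<gamma> \<gamma>' \<longleftrightarrow> \<gamma> \<noteq> \<gamma>' \<and> (\<exists>K K'. relevant_clique E Q \<gamma> K \<and> relevant_clique E Q \<gamma>' K'
     \<and> K \<inter> K' \<inter> Q \<noteq> {} \<and> \<not> (K \<inter> Q \<subseteq> K' \<inter> Q) \<and> \<not> (K' \<inter> Q \<subseteq> K \<inter> Q))"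

definition full_antipodal_triple :: "'a set \<Rightarrow> ('a \<Rightarrow> 'a \<Rightarrow> bool) \<Rightarrow> 'a set \<Rightarrow> 'a set set \<Rightarrow> bool" where
  "full_antipodal_triple V E Q W \<longleftrightarrow> neighboring_triple V E Q W \<and>
     (\<forall>\<gamma>\<in>W. \<forall>\<gamma>'\<in>W. \<gamma> \<noteq> \<gamma>' \<longrightarrow> antipodal E Q \<gamma> \<gamma>')"

definition strong_Q_coloring :: "'a set \<Rightarrow> ('a \<Rightarrow> 'a \<Rightarrow> bool) \<Rightarrow> 'a set \<Rightarrow> ('a set \<Rightarrow> nat) \<Rightarrow> bool" where
  "strong_Q_coloring V E Q f \<longleftrightarrow>
     f ` Gamma V E Q \<subseteq> {1..card (Gamma V E Q)} \<and>
     (\<forall>\<gamma>\<in>Gamma V E Q. \<forall>\<gamma>'\<in>Gamma V E Q. antipodal E Q \<gamma> \<gamma>' \<longrightarrow> f \<gamma> \<noteq> f \<gamma>') \<and>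
     (\<forall>\<Lambda>. neighboring_triple V E Q \<Lambda> \<longrightarrow> card (f ` \<Lambda>) \<le> 2)"

definition strong_Q_colorable :: "'a set \<Rightarrow> ('a \<Rightarrow> 'a \<Rightarrow> bool) \<Rightarrow> 'a set \<Rightarrow> bool" where
  "strong_Q_colorable V E Q \<longleftrightarrow> (\<exists>f. strong_Q_coloring V E Q f)"

end

theory Submission
  imports Defs
begin

text \<open>Pigeonhole: condition (1) of a strong \<open>Q\<close>-coloring gives the three pairwise
  antipodal members of a full antipodal triple three distinct colors, while condition (2)
  allows at most two colors on any neighboring triple.\<close>

lemma strong_Q_coloring_inj_on_pairwise_antipodal:
  assumes "strong_Q_coloring V E Q f"
    and "W \<subseteq> Gamma V E Q"
    and "\<forall>\<gamma>\<in>W. \<forall>\<gamma>'\<in>W. \<gamma> \<noteq> \<gamma>' \<longrightarrow> antipodal E Q \<gamma> \<gamma>'"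
  shows "inj_on f W"
proof (rule inj_onI, rule ccontr)
  fix \<gamma> \<gamma>' assume "\<gamma> \<in> W" "\<gamma>' \<in> W" "f \<gamma> = f \<gamma>'" "\<gamma> \<noteq> \<gamma>'"
  with assms show False
    unfolding strong_Q_coloring_def by blast
qed

lemma strong_Q_coloring_no_full_antipodal_triple:
  assumes f: "strong_Q_coloring V E Q f"
    and W: "full_antipodal_triple V E Q W"
  shows False
proof -
  have triple: "neighboring_triple V E Q W"
    and antipodal: "\<forall>\<gamma>\<in>W. \<forall>\<gamma>'\<in>W. \<gamma> \<noteq> \<gamma>' \<longrightarrow> antipodal E Q \<gamma> \<gamma>'"
    using W unfolding full_antipodal_triple_def by auto
  have "W \<subseteq> Gamma V E Q" and "card W = 3"
    using triple unfolding neighboring_triple_def neighboring_def by auto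
  with f antipodal have "card (f ` W) = 3"
    by (metis strong_Q_coloring_inj_on_pairwise_antipodal card_image)
  moreover have "card (f ` W) \<le> 2"
    using f triple unfolding strong_Q_coloring_def by blast
  ultimately show False by simp
qed

theorem lemma2p7:
  fixes V :: "'a set" and E :: "'a \<Rightarrow> 'a \<Rightarrow> bool" and Q :: "'a set"
  assumes "graph V E"
    and "connected_graph V E"
    and "clique_separator V E Q"
    and "strong_Q_colorable V E Q"
  shows "\<not> (\<exists>W. full_antipodal_triple V E Q W)"
  using assms(4) strong_Q_coloring_no_full_antipodal_triple
  unfolding strong_Q_colorable_def by blast

end
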